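(* Let $G_{\mathrm{AndII}}$ be the $q$-grammar with master variables $\{x,y\}$, rule $x_j\mapsto q^jx_jy_{j+1}$, $y_j\mapsto q^{j+1}x_{j+1}$ ($j\ge0$), and order AIO, and let $D$ be its $q$-derivative. Let $\phi$ be the evaluation $\phi(x_j)=x$, $\phi(y_j)=y$ for all $j$ (commuting indeterminates). Then for all $n\ge0$, \[ \phi\big(D^n(x_0)\big)=E^{II}_{n+1}(q;x,y),\qquad\text{where } E^{II}_m(q;x,y)=\sum_{T\in\mathcal{T}^{II}_m}x^{l(T)}y^{u(T)}q^{\operatorname{inv}(T)}. \]
   Context: $\mathbb{K}$ is a commutative ring with unity and characteristic zero, $q$ an indeterminate. For a set $S$ of master variables, $\mathbb{S}=\{s_i:s\in S,\ i\ge0\}$ is a set of non-commuting variables, $F(\mathbb{S})$ the free group on $\mathbb{S}$, $\mathbb{E}=\mathbb{K}[q][F(\mathbb{S})]$ its group algebra. A rule $R$ assigns to each $s_i$ an element of $\mathbb{E}$, extended by $R(s_i^{-1})=-s_i^{-1}R(s_i)s_{i+1}^{-1}$. The up-arrow $\uparrow$ is the linear map replacing each letter $s_i^{\pm1}$ by $s_{i+1}^{\pm1}$. AIO stably reorders the letters of a word according to the position of their underlying variable in $x_0,y_0,x_1,y_1,\dots$. The $q$-derivative of a $q$-grammar $(S,R,\rho)$ is the $\mathbb{K}[q]$-linear map with $D(w_1\cdots w_n)=\sum_{j=1}^n\rho\big(w_1\cdots w_{j-1}R(w_j)\uparrow(w_{j+1}\cdots w_n)\big)$, $D^0=\mathrm{id}$,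 $D^k=D\circ D^{k-1}$; an evaluation extends to a $\mathbb{K}[q]$-linear ring morphism. An increasing binary tree on $[m]$ is a rooted tree on $\{1,\dots,m\}$ with labels increasing along paths from the root, each vertex having at most one (distinguished) left child and at most one right child. $\mathcal{T}^{II}_m$ is the set of André II trees on $[m]$: increasing binary trees in which, for every vertex with at least one child, the minimum label of the left subtree is greater than the minimum label of the right subtree (minimum of the empty tree $=+\infty$). $l(T)$ is the number of leaves, $u(T)$ the number of vertices with exactly one child. An inversion of $T$ is a pair $(i,j)$ of vertices with $i>j$ such that either (1) $j$ belongs to the right subtree of some vertex $v$ on the path from the root to $i$ whose left child is on that path; or (2) $j$ is on the path from the root to $i$ and the left child of $j$ is on that path; $\operatorname{inv}(T)$ counts inversions. *)

theory Defs
  imports "HOL-Computational_Algebra.Polynomial" "HOL-Library.Extended_Nat"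
begin

datatype mvar = VX | VY

type_synonym letter = "mvar \<times> nat"
type_synonym word = "letter list"

(* elements of E = K[q][words]: finitely supported coefficient functions *)
type_synonym 'a elt = "word \<Rightarrow> 'a poly"

definition single_elt :: "word \<Rightarrow> 'a::zero poly \<Rightarrow> 'a elt" where
  "single_elt w c = (\<lambda>v. if v = w then c else 0)"

definition supp :: "'a::zero elt \<Rightarrow> word set" where
  "supp f = {w. f w \<noteq> 0}"

definition lin_ext :: "(word \<Rightarrow> 'a::comm_ring_1 elt) \<Rightarrow> 'a elt \<Rightarrow> 'a elt" where
  "lin_ext g f = (\<lambda>v. \<Sum>w\<in>supp f. f w * g w v)"

definition up :: "word \<Rightarrow> word" where
  "up w = map (\<lambda>(s, i). (s, Suc i)) w"

fun rule_AndII :: "letter \<Rightarrow> 'a::comm_ring_1 elt" where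
  "rule_AndII (VX, j) = single_elt [(VX, j), (VY, Suc j)] (monom 1 j)"
| "rule_AndII (VY, j) = single_elt [(VX, Suc j)] (monom 1 (Suc j))"

fun aio_key :: "letter \<Rightarrow> nat" where
  "aio_key (VX, j) = 2 * j"
| "aio_key (VY, j) = 2 * j + 1"

(* AIO: stable reordering of letters (sort_key is a stable insertion sort) *)
definition AIO :: "word \<Rightarrow> word" where
  "AIO w = sort_key aio_key w"

definition D_word :: "word \<Rightarrow> 'a::comm_ring_1 elt" where
  "D_word w = (\<lambda>v. \<Sum>j<length w. \<Sum>u\<in>supp (rule_AndII (w ! j) :: 'a elt).
      if AIO (take j w @ u @ up (drop (Suc j) w)) = v then rule_AndII (w ! j) u else 0)"

definition D_AndII :: "'a::comm_ring_1 elt \<Rightarrow> 'a elt" where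
  "D_AndII = lin_ext D_word"

(* coefficient of x^a y^b q^c in phi(f), where phi(x_j) = x, phi(y_j) = y *)
definition phi_coeff :: "'a::comm_ring_1 elt \<Rightarrow> nat \<Rightarrow> nat \<Rightarrow> nat \<Rightarrow> 'a" where
  "phi_coeff f a b c =
     (\<Sum>w\<in>{w\<in>supp f. length (filter (\<lambda>l. fst l = VX) w) = a
                    \<and> length (filter (\<lambda>l. fst l = VY) w) = b}. coeff (f w) c)"

(* Node l v r : vertex v with left subtree l and right subtree r; Leaf = empty tree *)
datatype btree = Leaf | Node btree nat btree

fun labels :: "btree \<Rightarrow> nat set" where
  "labels Leaf = {}"
| "labels (Node l v r) = insert v (labels l \<union> labels r)"

fun label_list :: "btree \<Rightarrow> nat list" where
  "label_list Leaf = []"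
| "label_list (Node l v r) = v # label_list l @ label_list r"

fun subtrees :: "btree \<Rightarrow> btree set" where
  "subtrees Leaf = {}"
| "subtrees (Node l v r) = insert (Node l v r) (subtrees l \<union> subtrees r)"

fun increasing :: "btree \<Rightarrow> bool" where
  "increasing Leaf = True"
| "increasing (Node l v r) =
     (increasing l \<and> increasing r \<and> (\<forall>x\<in>labels l \<union> labels r. v < x))"

definition incr_tree_on :: "nat \<Rightarrow> btree \<Rightarrow> bool" where
  "incr_tree_on m T \<longleftrightarrow> distinct (label_list T) \<and> labels T = {1..m} \<and> increasing T"

definition min_label :: "btree \<Rightarrow> enat" where
  "min_label T = (if T = Leaf then \<infinity> else enat (Min (labels T)))"

fun andre2 :: "btree \<Rightarrow> bool" where
  "andre2 Leaf = True"
| "andre2 (Node l v r) = (andre2 l \<and> andre2 r \<and>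
     ((l \<noteq> Leaf \<or> r \<noteq> Leaf) \<longrightarrow> min_label l > min_label r))"

definition andreII_trees :: "nat \<Rightarrow> btree set" where
  "andreII_trees m = {T. incr_tree_on m T \<and> andre2 T}"

fun n_leaves :: "btree \<Rightarrow> nat" where
  "n_leaves Leaf = 0"
| "n_leaves (Node l v r) =
     (if l = Leaf \<and> r = Leaf then 1 else 0) + n_leaves l + n_leaves r"

fun n_unary :: "btree \<Rightarrow> nat" where
  "n_unary Leaf = 0"
| "n_unary (Node l v r) =
     (if (l = Leaf) \<noteq> (r = Leaf) then 1 else 0) + n_unary l + n_unary r"

(* v is on the path from the root to i and the left child of v is on that path,
   i.e. i lies in the left subtree of v *)
definition goes_left :: "btree \<Rightarrow> nat \<Rightarrow> nat \<Rightarrow> bool" where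
  "goes_left T v i \<longleftrightarrow> (\<exists>l r. Node l v r \<in> subtrees T \<and> i \<in> labels l)"

definition in_right_sub :: "btree \<Rightarrow> nat \<Rightarrow> nat \<Rightarrow> bool" where
  "in_right_sub T v j \<longleftrightarrow> (\<exists>l r. Node l v r \<in> subtrees T \<and> j \<in> labels r)"

definition inversions :: "btree \<Rightarrow> (nat \<times> nat) set" where
  "inversions T = {(i, j). i \<in> labels T \<and> j \<in> labels T \<and> i > j \<and>
      ((\<exists>v. goes_left T v i \<and> in_right_sub T v j) \<or> goes_left T j i)}"

definition inv_count :: "btree \<Rightarrow> nat" where
  "inv_count T = card (inversions T)"

end

theory Submission
  imports Defs
begin

(* Read an increasing binary tree T in right-root-left order and record, for every vertex
   without a left child, the letter x_j if it is a leaf and y_j if it has only a right child,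
   where j is the number of vertices read before it. The resulting word w(T) is AIO-sorted, and
   its letters are exactly the places where a new maximal label can be attached to an Andre II
   tree: as the right child of a leaf (x_j becomes x_j y_(j+1)) or as the left child of a vertex
   with only a right child (y_j becomes x_(j+1)); all later letters move up by one. Attaching at
   x_j or y_j creates j resp. j+1 new inversions, the exponent of q in the rule, and every Andre II
   tree on [m+1] arises exactly once in this way from one on [m], by removing the vertex m+1.
   Hence D^n(x_0) is the sum of q^inv(T) w(T) over the Andre II trees T on [n+1], and phi counts
   the letters x (leaves) and y (vertices with one child, since in an Andre II tree no vertex has
   only a left child). *)

fun n_slots :: "btree \<Rightarrow> nat" where
  "n_slots Leaf = 0"
| "n_slots (Node l v r) = n_slots r + (if l = Leaf then 1 else 0) + n_slots l"

fun tree_word :: "btree \<Rightarrow> nat \<Rightarrow> word" where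
  "tree_word Leaf c = []"
| "tree_word (Node l v r) c = tree_word r c @
     (if l = Leaf then [if r = Leaf then (VX, c) else (VY, c + size r)] else []) @
     tree_word l (c + size r + 1)"

definition shift_word :: "nat \<Rightarrow> word \<Rightarrow> word" where
  "shift_word d w = map (\<lambda>(s, i). (s, i + d)) w"

lemma length_tree_word [simp]: "length (tree_word T c) = n_slots T"
  by (induction T arbitrary: c) auto

lemma tree_word_shift: "tree_word T (c + d) = shift_word d (tree_word T c)"
proof (induction T arbitrary: c)
  case (Node l v r)
  then show ?case
    using Node.IH(1)[of "c + size r + 1"] by (simp add: shift_word_def ac_simps)
qed (simp add: shift_word_def)

lemma up_eq_shift_word: "up = shift_word 1"
  by (simp add: fun_eq_iff up_def shift_word_def)

lemma tree_word_Suc: "tree_word T (Suc c) = up (tree_word T c)"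
  using tree_word_shift[of T c 1] by (simp add: up_eq_shift_word)

lemma up_Nil [simp]: "up [] = []"
  and up_Cons [simp]: "up ((s, i) # w) = (s, Suc i) # up w"
  and up_append [simp]: "up (u @ w) = up u @ up w"
  by (simp_all add: up_def)

lemma tree_word_index_bounds:
  "x \<in> set (tree_word T c) \<Longrightarrow> c \<le> snd x \<and> snd x < c + size T"
  by (induction T arbitrary: c) (fastforce split: if_splits)+

lemma aio_key_bounds: "2 * snd x \<le> aio_key x \<and> aio_key x \<le> 2 * snd x + 1"
  by (cases x rule: aio_key.cases) auto

lemma sorted_aio_key_tree_word: "sorted (map aio_key (tree_word T c))"
proof (induction T arbitrary: c)
  case Leaf
  then show ?case by simp
next
  case (Node l v r)
  have right: "aio_key x < 2 * (c + size r)" if "x \<in> set (tree_word r c)" for x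
    using tree_word_index_bounds[OF that] aio_key_bounds[of x] by (elim conjE) presburger
  have left: "2 * (c + size r + 1) \<le> aio_key x" if "x \<in> set (tree_word l (c + size r + 1))" for x
    using tree_word_index_bounds[OF that] aio_key_bounds[of x] by (elim conjE) presburger
  show ?case
    using Node.IH right left by (fastforce simp: sorted_append intro: order.trans less_imp_le)
qed

lemma AIO_tree_word [simp]: "AIO (tree_word T c) = tree_word T c"
  unfolding AIO_def by (rule sort_key_id_if_sorted[OF sorted_aio_key_tree_word])

fun rule_word :: "letter \<Rightarrow> word" where
  "rule_word (VX, j) = [(VX, j), (VY, Suc j)]"
| "rule_word (VY, j) = [(VX, Suc j)]"

fun rule_exp :: "letter \<Rightarrow> nat" where
  "rule_exp (VX, j) = j"
| "rule_exp (VY, j) = Suc j"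

lemma rule_AndII_eq: "rule_AndII x = single_elt (rule_word x) (monom 1 (rule_exp x))"
  by (cases x rule: rule_exp.cases) auto

lemma rule_exp_shift: "rule_exp (s, i + d) = rule_exp (s, i) + d"
  by (cases s) auto

fun attach :: "btree \<Rightarrow> nat \<Rightarrow> nat \<Rightarrow> btree" where
  "attach Leaf k M = Leaf"
| "attach (Node l v r) k M =
    (if k < n_slots r then Node l v (attach r k M)
     else if l = Leaf then
       (if r = Leaf then Node Leaf v (Node Leaf M Leaf) else Node (Node Leaf M Leaf) v r)
     else Node (attach l (k - n_slots r) M) v r)"

lemma attach_cases [consumes 1, case_names right leaf unary left]:
  assumes "k < n_slots (Node l v r)"
  obtains
    "k < n_slots r" "attach (Node l v r) k M = Node l v (attach r k M)"
  | "k = n_slots r" "l = Leaf" "r = Leaf"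
    "attach (Node l v r) k M = Node Leaf v (Node Leaf M Leaf)"
  | "k = n_slots r" "l = Leaf" "r \<noteq> Leaf"
    "attach (Node l v r) k M = Node (Node Leaf M Leaf) v r"
  | k' where "k = n_slots r + k'" "k' < n_slots l" "l \<noteq> Leaf"
    "attach (Node l v r) k M = Node (attach l k' M) v r"
proof (cases "k < n_slots r")
  case True
  then show ?thesis using that(1) by simp
next
  case not_right: False
  show ?thesis
  proof (cases "l = Leaf")
    case True
    then show ?thesis using not_right assms that(2,3) by (cases "r = Leaf") auto
  next
    case False
    then show ?thesis using not_right assms that(4)[of "k - n_slots r"] by auto
  qed
qed

lemma size_attach: "k < n_slots T \<Longrightarrow> size (attach T k M) = Suc (size T)"
  by (induction T arbitrary: k) (auto elim: attach_cases)

lemma attach_eq_Leaf_iff [simp]: "attach T k M = Leaf \<longleftrightarrow> T = Leaf"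
  by (cases T) auto

lemma tree_word_attach:
  assumes "k < n_slots T"
  shows "tree_word (attach T k M) c =
    take k (tree_word T c) @ rule_word (tree_word T c ! k) @ up (drop (Suc k) (tree_word T c))"
  using assms
proof (induction T arbitrary: k c)
  case Leaf
  then show ?case by simp
next
  case (Node l v r)
  from Node.prems show ?case
  proof (cases rule: attach_cases[where M = M])
    case right
    then have "r \<noteq> Leaf" by auto
    with right show ?thesis
      using Node.IH(2)[OF right(1), of c] size_attach[OF right(1)] tree_word_Suc[of l]
      by (auto simp: nth_append)
  next
    case (left k')
    then show ?thesis
      using Node.IH(1)[OF left(2), of "c + size r + 1"] by (simp add: nth_append)
  qed (simp_all add: nth_append)
qed

lemma labels_eq_empty_iff [simp]: "labels T = {} \<longleftrightarrow> T = Leaf"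
  by (cases T) auto

lemma finite_labels [simp]: "finite (labels T)"
  by (induction T) auto

lemma set_label_list [simp]: "set (label_list T) = labels T"
  by (induction T) auto

lemma card_labels: "distinct (label_list T) \<Longrightarrow> card (labels T) = size T"
  by (induction T) (auto simp: card_Un_disjoint)

lemma labels_attach: "k < n_slots T \<Longrightarrow> labels (attach T k M) = insert M (labels T)"
  by (induction T arbitrary: k) (auto elim!: attach_cases[where M = M])

lemma distinct_attach:
  "\<lbrakk>k < n_slots T; distinct (label_list T); M \<notin> labels T\<rbrakk>
   \<Longrightarrow> distinct (label_list (attach T k M))"
  by (induction T arbitrary: k) (auto elim!: attach_cases[where M = M] simp: labels_attach)

lemma increasing_attach:
  "\<lbrakk>k < n_slots T; increasing T; \<forall>x\<in>labels T. x < M\<rbrakk> \<Longrightarrow> increasing (attach T k M)"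
  by (induction T arbitrary: k) (auto elim!: attach_cases[where M = M] simp: labels_attach)

lemma min_label_attach:
  assumes "k < n_slots T" "\<forall>x\<in>labels T. x < M"
  shows "min_label (attach T k M) = min_label T"
proof -
  have "T \<noteq> Leaf" using assms(1) by auto
  moreover have "Min (labels T) < M" using \<open>T \<noteq> Leaf\<close> assms(2) by simp
  ultimately have "Min (insert M (labels T)) = Min (labels T)"
    by (metis Min_insert finite_labels labels_eq_empty_iff min.absorb2 less_imp_le)
  with assms(1) \<open>T \<noteq> Leaf\<close> show ?thesis
    by (simp add: min_label_def labels_attach)
qed

lemma andre2_attach_iff:
  "\<lbrakk>k < n_slots T; \<forall>x\<in>labels T. x < M\<rbrakk> \<Longrightarrow> andre2 (attach T k M) \<longleftrightarrow> andre2 T"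
proof (induction T arbitrary: k)
  case Leaf
  then show ?case by simp
next
  case (Node l v r)
  from Node.prems(1) show ?case
  proof (cases rule: attach_cases[where M = M])
    case right
    then show ?thesis using Node.IH(2) Node.prems min_label_attach[of k r M] by auto
  next
    case left
    then show ?thesis using Node.IH(1) Node.prems min_label_attach[of _ l M] by auto
  next
    case unary
    then have "Min (labels r) < M" using Node.prems(2) by simp
    with unary show ?thesis by (simp add: min_label_def)
  qed (simp add: min_label_def)
qed

fun detach :: "nat \<Rightarrow> btree \<Rightarrow> btree" where
  "detach M Leaf = Leaf"
| "detach M (Node l v r) = (if v = M then Leaf else Node (detach M l) v (detach M r))"

fun slot_of :: "nat \<Rightarrow> btree \<Rightarrow> nat" where
  "slot_of M Leaf = 0"
| "slot_of M (Node l v r) =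
    (if M \<in> labels r then (if r = Node Leaf M Leaf then 0 else slot_of M r)
     else if l = Node Leaf M Leaf then n_slots r else n_slots r + slot_of M l)"

lemma detach_notin: "M \<notin> labels T \<Longrightarrow> detach M T = T"
  by (induction T) auto

lemma detach_attach: "\<lbrakk>k < n_slots T; M \<notin> labels T\<rbrakk> \<Longrightarrow> detach M (attach T k M) = T"
  by (induction T arbitrary: k) (auto elim!: attach_cases[where M = M] simp: detach_notin)

lemma slot_of_attach: "\<lbrakk>k < n_slots T; M \<notin> labels T\<rbrakk> \<Longrightarrow> slot_of M (attach T k M) = k"
proof (induction T arbitrary: k)
  case Leaf
  then show ?case by simp
next
  case (Node l v r)
  from Node.prems(1) show ?case
  proof (cases rule: attach_cases[where M = M])
    case right
    then have "attach r k M \<noteq> Node Leaf M Leaf"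
      using Node.prems(2) by (cases r) auto
    with right show ?thesis using Node.IH(2) Node.prems by (auto simp: labels_attach)
  next
    case (left k')
    then have "attach l k' M \<noteq> Node Leaf M Leaf"
      using Node.prems(2) by (cases l) auto
    with left show ?thesis using Node.IH(1) Node.prems by auto
  qed (use Node.prems in auto)
qed

lemma increasing_max_is_leaf:
  "\<lbrakk>increasing (Node l v r); \<forall>x\<in>labels (Node l v r). x \<le> v\<rbrakk> \<Longrightarrow> l = Leaf \<and> r = Leaf"
  by (auto simp flip: labels_eq_empty_iff dest: leD)

(* The Andre II condition is what makes detach invertible: it forbids a right child M with a
   left sibling and a left child M without a right sibling. *)
lemma attach_detach:
  assumes "distinct (label_list T)" "increasing T" "andre2 T" "M \<in> labels T"
    "\<forall>x\<in>labels T. x \<le> M" "T \<noteq> Node Leaf M Leaf"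
  shows "slot_of M T < n_slots (detach M T) \<and> attach (detach M T) (slot_of M T) M = T"
  using assms
proof (induction T)
  case Leaf
  then show ?case by simp
next
  case (Node l v r)
  have "v \<noteq> M"
    using Node.prems increasing_max_is_leaf[of l v r] by auto
  show ?case
  proof (cases "M \<in> labels r")
    case True
    then have l_below: "\<forall>x\<in>labels l. x < M"
      using Node.prems(1,5) by (fastforce simp: order.order_iff_strict)
    show ?thesis
    proof (cases "r = Node Leaf M Leaf")
      case True
      then have "l = Leaf"
        using Node.prems(3) l_below by (cases l) (auto simp: min_label_def)
      with True \<open>v \<noteq> M\<close> show ?thesis by simp
    next
      case False
      have "M \<notin> labels l" using True Node.prems(1) by auto
      with True False Node.IH(2) Node.prems \<open>v \<noteq> M\<close> show ?thesis
        by (auto simp: detach_notin)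
    qed
  next
    case False
    then have "M \<in> labels l" using Node.prems(4) \<open>v \<noteq> M\<close> by simp
    show ?thesis
    proof (cases "l = Node Leaf M Leaf")
      case True
      then have "r \<noteq> Leaf" using Node.prems(3) by (auto simp: min_label_def)
      with True False \<open>v \<noteq> M\<close> show ?thesis by (simp add: detach_notin)
    next
      case l_not_single: False
      with \<open>M \<in> labels l\<close> Node.IH(1) Node.prems have
        "slot_of M l < n_slots (detach M l)" "attach (detach M l) (slot_of M l) M = l"
        by auto
      with False l_not_single \<open>v \<noteq> M\<close> show ?thesis by (auto simp: detach_notin)
    qed
  qed
qed

lemma labels_detach:
  "\<lbrakk>increasing T; \<forall>x\<in>labels T. x \<le> M\<rbrakk> \<Longrightarrow> labels (detach M T) = labels T - {M}"
proof (induction T)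
  case (Node l v r)
  then show ?case using increasing_max_is_leaf[of l v r] by auto
qed simp

lemma labels_detach_subset: "labels (detach M T) \<subseteq> labels T"
  by (induction T) auto

lemma distinct_detach: "distinct (label_list T) \<Longrightarrow> distinct (label_list (detach M T))"
  by (induction T) (use labels_detach_subset in fastforce)+

lemma increasing_detach: "increasing T \<Longrightarrow> increasing (detach M T)"
  by (induction T) (use labels_detach_subset in fastforce)+

lemma attach_in_andreII_trees:
  assumes "T \<in> andreII_trees m" "k < n_slots T"
  shows "attach T k (Suc m) \<in> andreII_trees (Suc m)"
proof -
  have "labels T = {1..m}" "\<forall>x\<in>labels T. x < Suc m"
    using assms(1) by (auto simp: andreII_trees_def incr_tree_on_def)
  with assms show ?thesis
    by (auto simp: andreII_trees_def incr_tree_on_def labels_attach distinct_attach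
        increasing_attach andre2_attach_iff)
qed

lemma andreII_trees_detach:
  assumes "0 < m" "T \<in> andreII_trees (Suc m)"
  shows "detach (Suc m) T \<in> andreII_trees m \<and> slot_of (Suc m) T < n_slots (detach (Suc m) T)
    \<and> attach (detach (Suc m) T) (slot_of (Suc m) T) (Suc m) = T"
proof -
  have T: "distinct (label_list T)" "labels T = {1..Suc m}" "increasing T" "andre2 T"
    using assms(2) by (simp_all add: andreII_trees_def incr_tree_on_def)
  then have max: "Suc m \<in> labels T" "\<forall>x\<in>labels T. x \<le> Suc m"
    by simp_all
  have "T \<noteq> Node Leaf (Suc m) Leaf"
  proof
    assume "T = Node Leaf (Suc m) Leaf"
    with T(2) have "{1..Suc m} = {Suc m}" by simp
    with assms(1) show False by (simp add: atLeastAtMost_singleton_iff)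
  qed
  with attach_detach[OF T(1,3,4) max] have attach:
    "slot_of (Suc m) T < n_slots (detach (Suc m) T)"
    "attach (detach (Suc m) T) (slot_of (Suc m) T) (Suc m) = T"
    by blast+
  have labels: "labels (detach (Suc m) T) = {1..m}"
    using labels_detach[OF T(3) max(2)] T(2) by (simp add: atLeastAtMostSuc_conv)
  then have "andre2 (detach (Suc m) T)"
    using andre2_attach_iff[OF attach(1), of "Suc m"] attach(2) T(4) by simp
  with labels attach T(1,3) show ?thesis
    by (simp add: andreII_trees_def incr_tree_on_def distinct_detach increasing_detach)
qed

lemma andreII_trees_Suc:
  assumes "0 < m"
  shows "andreII_trees (Suc m) =
    (\<lambda>(T, k). attach T k (Suc m)) ` (SIGMA T:andreII_trees m. {..<n_slots T})"
proof (intro equalityI subsetI)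
  fix T assume "T \<in> andreII_trees (Suc m)"
  note detach = andreII_trees_detach[OF assms this]
  show "T \<in> (\<lambda>(T, k). attach T k (Suc m)) ` (SIGMA T:andreII_trees m. {..<n_slots T})"
  proof (rule rev_image_eqI)
    show "(detach (Suc m) T, slot_of (Suc m) T) \<in> (SIGMA T:andreII_trees m. {..<n_slots T})"
      using detach by simp
    show "T = (\<lambda>(T, k). attach T k (Suc m)) (detach (Suc m) T, slot_of (Suc m) T)"
      using detach by simp
  qed
next
  fix T assume "T \<in> (\<lambda>(T, k). attach T k (Suc m)) ` (SIGMA T:andreII_trees m. {..<n_slots T})"
  then show "T \<in> andreII_trees (Suc m)" by (auto simp: attach_in_andreII_trees)
qed

lemma inj_on_attach:
  assumes "\<forall>T\<in>X. M \<notin> labels T"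
  shows "inj_on (\<lambda>(T, k). attach T k M) (SIGMA T:X. {..<n_slots T})"
proof (rule inj_onI, clarsimp)
  fix T1 k1 T2 k2
  assume "T1 \<in> X" "k1 < n_slots T1" "T2 \<in> X" "k2 < n_slots T2"
    and "attach T1 k1 M = attach T2 k2 M"
  with assms show "T1 = T2 \<and> k1 = k2"
    by (metis detach_attach slot_of_attach)
qed

lemma andreII_trees_1: "andreII_trees (Suc 0) = {Node Leaf 1 Leaf}"
proof (intro equalityI subsetI)
  fix T assume "T \<in> andreII_trees (Suc 0)"
  then have "labels T = {1}" "increasing T"
    by (auto simp: andreII_trees_def incr_tree_on_def)
  then show "T \<in> {Node Leaf 1 Leaf}"
    using increasing_max_is_leaf by (cases T) (auto simp flip: labels_eq_empty_iff)
qed (simp add: andreII_trees_def incr_tree_on_def min_label_def)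

lemma finite_andreII_trees: "0 < m \<Longrightarrow> finite (andreII_trees m)"
proof (induction m)
  case (Suc m)
  then show ?case
    by (cases "m = 0") (simp_all add: andreII_trees_1 andreII_trees_Suc)
qed simp

lemma subtrees_labels: "Node l w r \<in> subtrees T \<Longrightarrow> insert w (labels l \<union> labels r) \<subseteq> labels T"
  by (induction T) auto

lemma goes_left_Node:
  "goes_left (Node l v r) w i \<longleftrightarrow> w = v \<and> i \<in> labels l \<or> goes_left l w i \<or> goes_left r w i"
  by (auto simp: goes_left_def)

lemma in_right_sub_Node:
  "in_right_sub (Node l v r) w j \<longleftrightarrow> w = v \<and> j \<in> labels r \<or> in_right_sub l w j \<or> in_right_sub r w j"
  by (auto simp: in_right_sub_def)

lemma goes_left_labels: "goes_left T w i \<Longrightarrow> w \<in> labels T \<and> i \<in> labels T"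
  by (auto simp: goes_left_def dest: subtrees_labels)

lemma in_right_sub_labels: "in_right_sub T w j \<Longrightarrow> w \<in> labels T \<and> j \<in> labels T"
  by (auto simp: in_right_sub_def dest: subtrees_labels)

lemma inversions_subset: "inversions T \<subseteq> labels T \<times> labels T"
  by (auto simp: inversions_def)

lemma finite_inversions: "finite (inversions T)"
  using inversions_subset by (rule finite_subset) simp

lemma inv_count_Leaf [simp]: "inv_count Leaf = 0"
  by (simp add: inv_count_def inversions_def)

lemma inversions_Node:
  assumes "distinct (label_list (Node l v r))"
  shows "inversions (Node l v r) = inversions l \<union> inversions r \<union>
    {(i, j). i \<in> labels l \<and> j \<in> insert v (labels r) \<and> j < i}"
  using assms
  by (auto simp: inversions_def goes_left_Node in_right_sub_Node
      dest: goes_left_labels in_right_sub_labels)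

lemma inv_count_Node:
  assumes "distinct (label_list (Node l v r))"
  shows "inv_count (Node l v r) = inv_count l + inv_count r +
    card {(i, j). i \<in> labels l \<and> j \<in> insert v (labels r) \<and> j < i}"
proof -
  let ?C = "{(i, j). i \<in> labels l \<and> j \<in> insert v (labels r) \<and> j < i}"
  have "?C \<subseteq> labels l \<times> insert v (labels r)" by auto
  then have "finite ?C" by (rule finite_subset) simp
  moreover have "inversions l \<inter> inversions r = {}" "(inversions l \<union> inversions r) \<inter> ?C = {}"
    using assms inversions_subset[of l] inversions_subset[of r] by auto
  ultimately show ?thesis
    using assms by (simp add: inv_count_def inversions_Node card_Un_disjoint finite_inversions)
qed

lemma rule_exp_tree_word_nth:
  "k < n_slots T \<Longrightarrow> rule_exp (tree_word T c ! k) = rule_exp (tree_word T 0 ! k) + c"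
  using tree_word_shift[of T 0 c] rule_exp_shift
  by (auto simp: shift_word_def split: prod.split)

lemma inv_count_attach:
  "\<lbrakk>k < n_slots T; distinct (label_list T); \<forall>x\<in>labels T. x < M\<rbrakk>
   \<Longrightarrow> inv_count (attach T k M) = inv_count T + rule_exp (tree_word T 0 ! k)"
proof (induction T arbitrary: k)
  case Leaf
  then show ?case by simp
next
  case (Node l v r)
  let ?C = "\<lambda>L. {(i, j). i \<in> L \<and> j \<in> insert v (labels r) \<and> j < i}"
  have dist: "distinct (label_list (attach (Node l v r) k M))"
    using Node.prems by (intro distinct_attach) auto
  have below_l: "x < M" if "x \<in> labels l" for x
    using Node.prems(3) that by simp
  have below_r: "x < M" if "x \<in> insert v (labels r)" for x
    using Node.prems(3) that by auto
  have card_vr: "card (insert v (labels r)) = Suc (size r)"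
    using Node.prems(2) by (simp add: card_labels)
  from Node.prems(1) show ?case
  proof (cases rule: attach_cases[where M = M])
    case right
    have "{(i, j). i \<in> labels l \<and> j \<in> insert v (labels (attach r k M)) \<and> j < i} = ?C (labels l)"
      using below_l by (fastforce simp: labels_attach[OF right(1)])
    with right dist Node.prems Node.IH(2)[of k] show ?thesis
      by (simp add: inv_count_Node nth_append)
  next
    case leaf
    with dist Node.prems show ?thesis by (simp add: inv_count_Node)
  next
    case unary
    have "?C {M} = {M} \<times> insert v (labels r)"
      using below_r by auto
    with unary dist Node.prems card_vr show ?thesis
      by (simp add: inv_count_Node nth_append card_cartesian_product)
  next
    case (left k')
    have split: "?C (labels (attach l k' M)) = ?C (labels l) \<union> {M} \<times> insert v (labels r)"
      using below_r by (auto simp: labels_attach[OF left(2)])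
    have "finite (?C (labels l))"
      by (rule finite_subset[of _ "labels l \<times> insert v (labels r)"]) auto
    moreover have "?C (labels l) \<inter> {M} \<times> insert v (labels r) = {}"
      using below_l by auto
    ultimately have "card (?C (labels (attach l k' M))) = card (?C (labels l)) + Suc (size r)"
      unfolding split card_vr[symmetric]
      by (subst card_Un_disjoint) (simp_all only: card_cartesian_product_singleton finite_cartesian_product
          finite_insert finite_labels finite.emptyI)
    moreover have "rule_exp (tree_word (Node l v r) 0 ! k) = rule_exp (tree_word l 0 ! k') + Suc (size r)"
      using left rule_exp_tree_word_nth[OF left(2), of "size r + 1"] by (simp add: nth_append)
    ultimately show ?thesis
      using left dist Node.prems Node.IH(1)[of k'] by (simp add: inv_count_Node)
  qed
qed

definition sum_words :: "'b set \<Rightarrow> ('b \<Rightarrow> word) \<Rightarrow> ('b \<Rightarrow> 'a::comm_ring_1 poly) \<Rightarrow> 'a elt" where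
  "sum_words X f p = (\<lambda>w. \<Sum>x\<in>X. if f x = w then p x else 0)"

lemma supp_sum_words: "supp (sum_words X f p) \<subseteq> f ` X"
proof
  fix w assume "w \<in> supp (sum_words X f p)"
  then have "(\<Sum>x\<in>X. if f x = w then p x else 0) \<noteq> 0"
    by (simp add: supp_def sum_words_def)
  then obtain x where "x \<in> X" "(if f x = w then p x else 0) \<noteq> 0"
    by (rule sum.not_neutral_contains_not_neutral)
  then show "w \<in> f ` X" by (auto split: if_splits)
qed

lemma lin_ext_sum_words:
  assumes "finite X"
  shows "lin_ext g (sum_words X f p) v = (\<Sum>x\<in>X. p x * g (f x) v)"
proof -
  have "lin_ext g (sum_words X f p) v = (\<Sum>w\<in>f ` X. sum_words X f p w * g w v)"
    unfolding lin_ext_def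
  proof (rule sum.mono_neutral_left)
    show "finite (f ` X)" using assms by simp
    show "supp (sum_words X f p) \<subseteq> f ` X" by (rule supp_sum_words)
  qed (auto simp: supp_def)
  also have "\<dots> = (\<Sum>w\<in>f ` X. \<Sum>x\<in>X. if f x = w then p x * g w v else 0)"
    by (auto simp: sum_words_def sum_distrib_right intro!: sum.cong)
  also have "\<dots> = (\<Sum>x\<in>X. p x * g (f x) v)"
    using assms by (subst sum.swap) simp
  finally show ?thesis .
qed

lemma phi_coeff_sum_words:
  assumes "finite X"
  shows "phi_coeff (sum_words X f (\<lambda>x. monom 1 (h x)) :: 'a::comm_ring_1 elt) a b c =
    of_nat (card {x\<in>X. length (filter (\<lambda>l. fst l = VX) (f x)) = a \<and>
                        length (filter (\<lambda>l. fst l = VY) (f x)) = b \<and> h x = c})"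
proof -
  define P where "P w \<longleftrightarrow>
    length (filter (\<lambda>l. fst l = VX) w) = a \<and> length (filter (\<lambda>l. fst l = VY) w) = b"
    for w :: word
  let ?F = "sum_words X f (\<lambda>x. monom 1 (h x)) :: 'a elt"
  have "phi_coeff ?F a b c = (\<Sum>w\<in>{w\<in>f ` X. P w}. coeff (?F w) c)"
    unfolding phi_coeff_def P_def[symmetric]
  proof (rule sum.mono_neutral_left)
    show "finite {w\<in>f ` X. P w}" using assms by simp
    show "{w\<in>supp ?F. P w} \<subseteq> {w\<in>f ` X. P w}" using supp_sum_words by blast
  qed (auto simp: supp_def)
  also have "\<dots> = (\<Sum>w\<in>{w\<in>f ` X. P w}. \<Sum>x\<in>X. if f x = w then of_bool (h x = c) else 0)"
    by (auto simp: sum_words_def coeff_sum coeff_monom intro!: sum.cong)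
  also have "\<dots> = (\<Sum>x\<in>X. \<Sum>w\<in>{w\<in>f ` X. P w}. if f x = w then of_bool (h x = c) else 0)"
    by (rule sum.swap)
  also have "\<dots> = (\<Sum>x\<in>X. if P (f x) \<and> h x = c then 1 else 0)"
    using assms by (intro sum.cong refl) (simp add: sum.delta')
  also have "\<dots> = of_nat (card {x\<in>X. P (f x) \<and> h x = c})"
    using assms by (simp flip: sum.inter_filter)
  finally show ?thesis by (simp add: P_def conj_assoc)
qed

lemma supp_single_elt: "c \<noteq> 0 \<Longrightarrow> supp (single_elt u c) = {u}"
  by (auto simp: supp_def single_elt_def)

lemma D_word_eq:
  "D_word w v = (\<Sum>j<length w.
     if AIO (take j w @ rule_word (w ! j) @ up (drop (Suc j) w)) = v
     then monom 1 (rule_exp (w ! j)) else 0)"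
  unfolding D_word_def rule_AndII_eq
  by (intro sum.cong refl, subst supp_single_elt) (simp_all add: single_elt_def)

lemma AIO_attach_word:
  "k < n_slots T \<Longrightarrow> AIO (take k (tree_word T c) @ rule_word (tree_word T c ! k) @
     up (drop (Suc k) (tree_word T c))) = tree_word (attach T k M) c"
  using AIO_tree_word[of "attach T k M" c] tree_word_attach[of k T M c] by simp

lemma D_word_tree_word:
  "D_word (tree_word T 0) v = (\<Sum>k<n_slots T.
     if tree_word (attach T k M) 0 = v then monom 1 (rule_exp (tree_word T 0 ! k)) else 0)"
  unfolding D_word_eq length_tree_word
  by (intro sum.cong refl) (simp add: AIO_attach_word[where M = M])

definition andre_gf :: "nat \<Rightarrow> 'a::comm_ring_1 elt" where
  "andre_gf m = sum_words (andreII_trees m) (\<lambda>T. tree_word T 0) (\<lambda>T. monom 1 (inv_count T))"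

lemma D_AndII_andre_gf:
  assumes "0 < m"
  shows "D_AndII (andre_gf m) = andre_gf (Suc m)"
proof
  fix v
  let ?A = "andreII_trees m"
  let ?S = "SIGMA T:?A. {..<n_slots T}"
  let ?attach = "\<lambda>(T, k). attach T k (Suc m)"
  let ?h = "\<lambda>T. if tree_word T 0 = v then monom 1 (inv_count T) else 0"
  have fin: "finite ?A" using assms by (rule finite_andreII_trees)
  have "D_AndII (andre_gf m) v = (\<Sum>T\<in>?A. monom 1 (inv_count T) * D_word (tree_word T 0) v)"
    unfolding D_AndII_def andre_gf_def using fin by (rule lin_ext_sum_words)
  also have "\<dots> = (\<Sum>T\<in>?A. \<Sum>k<n_slots T. ?h (attach T k (Suc m)))"
  proof (intro sum.cong refl)
    fix T assume "T \<in> ?A"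
    then have "distinct (label_list T)" "\<forall>x\<in>labels T. x < Suc m"
      by (auto simp: andreII_trees_def incr_tree_on_def)
    then show "monom 1 (inv_count T) * D_word (tree_word T 0) v =
        (\<Sum>k<n_slots T. ?h (attach T k (Suc m)))"
      by (auto simp: D_word_tree_word[where M = "Suc m"] sum_distrib_left inv_count_attach
          mult_monom intro!: sum.cong)
  qed
  also have "\<dots> = (\<Sum>(T, k)\<in>?S. ?h (attach T k (Suc m)))"
    using fin by (intro sum.Sigma) auto
  also have "\<dots> = (\<Sum>T\<in>andreII_trees (Suc m). ?h T)"
  proof (rule sum.reindex_cong[symmetric, OF _ andreII_trees_Suc[OF assms]])
    show "inj_on ?attach ?S"
      by (rule inj_on_attach) (auto simp: andreII_trees_def incr_tree_on_def)
  qed auto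
  also have "\<dots> = andre_gf (Suc m) v"
    by (simp add: andre_gf_def sum_words_def)
  finally show "D_AndII (andre_gf m) v = andre_gf (Suc m) v" .
qed

lemma andre_gf_1: "andre_gf (Suc 0) = single_elt [(VX, 0)] 1"
proof -
  have "inv_count (Node Leaf 1 Leaf) = 0"
    by (simp add: inv_count_Node)
  then show ?thesis
    by (simp add: andre_gf_def sum_words_def andreII_trees_1 single_elt_def fun_eq_iff)
qed

lemma D_AndII_iterate: "(D_AndII ^^ n) (single_elt [(VX, 0)] 1) = andre_gf (Suc n)"
  by (induction n) (simp_all add: andre_gf_1 D_AndII_andre_gf)

lemma count_VX_tree_word: "length (filter (\<lambda>l. fst l = VX) (tree_word T c)) = n_leaves T"
  by (induction T arbitrary: c) auto

lemma count_VY_tree_word: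
  "andre2 T \<Longrightarrow> length (filter (\<lambda>l. fst l = VY) (tree_word T c)) = n_unary T"
proof (induction T arbitrary: c)
  case (Node l v r)
  have "l \<noteq> Leaf \<Longrightarrow> r \<noteq> Leaf"
    using Node.prems by (auto simp: min_label_def)
  with Node show ?case by auto
qed simp

theorem theorem6p12:
  fixes n a b c :: nat
  shows "phi_coeff (((D_AndII :: ('a::{comm_ring_1, ring_char_0}) elt \<Rightarrow> 'a elt) ^^ n)
                     (single_elt [(VX, 0)] 1)) a b c
         = of_nat (card {T \<in> andreII_trees (Suc n).
                 n_leaves T = a \<and> n_unary T = b \<and> inv_count T = c})"
proof -
  have "phi_coeff ((D_AndII ^^ n) (single_elt [(VX, 0)] 1) :: 'a elt) a b c =
    of_nat (card {T \<in> andreII_trees (Suc n).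
      length (filter (\<lambda>l. fst l = VX) (tree_word T 0)) = a \<and>
      length (filter (\<lambda>l. fst l = VY) (tree_word T 0)) = b \<and> inv_count T = c})"
    unfolding D_AndII_iterate andre_gf_def
    by (rule phi_coeff_sum_words) (simp add: finite_andreII_trees)
  also have "{T \<in> andreII_trees (Suc n).
      length (filter (\<lambda>l. fst l = VX) (tree_word T 0)) = a \<and>
      length (filter (\<lambda>l. fst l = VY) (tree_word T 0)) = b \<and> inv_count T = c} =
    {T \<in> andreII_trees (Suc n). n_leaves T = a \<and> n_unary T = b \<and> inv_count T = c}"
    by (auto simp: andreII_trees_def count_VX_tree_word count_VY_tree_word)
  finally show ?thesis .
qed

end
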